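(* Fix real numbers $\rho,\sigma$ with $\rho,\sigma\neq 0$ and $\rho\neq\pm\sigma$. For $(x,y)\in\mathbb{R}^2$ let $\ell_a$ and $\ell_c$ be the lines through $(0,0)$ with slopes $\rho$ and $-\rho$, and let $\ell_b$ and $\ell_d$ be the lines through $(x,y)$ with slopes $\sigma$ and $-\sigma$. Let $P_1=\ell_d\cap\ell_a$, $P_2=\ell_a\cap\ell_b$, $P_3=\ell_b\cap\ell_c$, $P_4=\ell_c\cap\ell_d$ be the vertices of the (possibly nonconvex or degenerate) quadrilateral $P_1P_2P_3P_4$. Fix unit vectors $u_a,u_b,u_c,u_d$ parallel to $\ell_a,\ell_b,\ell_c,\ell_d$ respectively, and define the signed lengths $a=(P_2-P_1)\cdot u_a$, $b=(P_3-P_2)\cdot u_b$, $c=(P_4-P_3)\cdot u_c$, $d=(P_1-P_4)\cdot u_d$, and the signed area $A=\frac12\sum_{i=1}^{4}\det(P_i,P_{i+1})$ (indices mod $4$), where the unit vectors are chosen and the overall sign of the area is adjusted (by multiplying $A$ by a fixed $\pm1$) so that $a,b,c,d,A>0$ at some parameter $(x,y)$ for which $P_1P_2P_3P_4$ is convex (assume such a parameter exists). Set $B^2=(s-a)(s-b)(s-c)(s-d)$ with $s=\frac{a+b+c+d}{2}$. Then, as functions of $(x,y)$, there are constants $\lambda,\mu$ (depending on $\rho,\sigma$ and the sign choices) such that $$A(x,y)=\lambda\,xy,\qquad B^2(x,y)=\mu\,(xy)^2 .$$ Consequently $A^2/B^2$ is constant on the set of $(x,y)$ for which $P_1P_2P_3P_4$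 is a convex quadrilateral.
   Context: $\det(P,Q)$ denotes the $2\times2$ determinant of the column vectors $P,Q\in\mathbb{R}^2$. The signed area of a closed polygon is the sum of areas of the regions it bounds, weighted by winding number; for a quadrilateral it equals $\frac12\sum_i\det(P_i,P_{i+1})$ up to orientation sign. *)

theory Defs
  imports "HOL-Analysis.Analysis"
begin

type_synonym pt = "real \<times> real"

definition det2 :: "pt \<Rightarrow> pt \<Rightarrow> real" where
  "det2 P Q = fst P * snd Q - snd P * fst Q"

definition line_slope :: "pt \<Rightarrow> real \<Rightarrow> pt set" where
  "line_slope p m = {q. snd q - snd p = m * (fst q - fst p)}"

definition meet :: "pt set \<Rightarrow> pt set \<Rightarrow> pt" where
  "meet L M = (THE p. p \<in> L \<inter> M)"

definition line_a :: "real \<Rightarrow> real \<Rightarrow> real \<Rightarrow> real \<Rightarrow> pt set" where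
  "line_a \<rho> \<sigma> x y = line_slope (0,0) \<rho>"
definition line_b :: "real \<Rightarrow> real \<Rightarrow> real \<Rightarrow> real \<Rightarrow> pt set" where
  "line_b \<rho> \<sigma> x y = line_slope (x,y) \<sigma>"
definition line_c :: "real \<Rightarrow> real \<Rightarrow> real \<Rightarrow> real \<Rightarrow> pt set" where
  "line_c \<rho> \<sigma> x y = line_slope (0,0) (-\<rho>)"
definition line_d :: "real \<Rightarrow> real \<Rightarrow> real \<Rightarrow> real \<Rightarrow> pt set" where
  "line_d \<rho> \<sigma> x y = line_slope (x,y) (-\<sigma>)"

definition P1 :: "real \<Rightarrow> real \<Rightarrow> real \<Rightarrow> real \<Rightarrow> pt" where
  "P1 \<rho> \<sigma> x y = meet (line_d \<rho> \<sigma> x y) (line_a \<rho> \<sigma> x y)"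
definition P2 :: "real \<Rightarrow> real \<Rightarrow> real \<Rightarrow> real \<Rightarrow> pt" where
  "P2 \<rho> \<sigma> x y = meet (line_a \<rho> \<sigma> x y) (line_b \<rho> \<sigma> x y)"
definition P3 :: "real \<Rightarrow> real \<Rightarrow> real \<Rightarrow> real \<Rightarrow> pt" where
  "P3 \<rho> \<sigma> x y = meet (line_b \<rho> \<sigma> x y) (line_c \<rho> \<sigma> x y)"
definition P4 :: "real \<Rightarrow> real \<Rightarrow> real \<Rightarrow> real \<Rightarrow> pt" where
  "P4 \<rho> \<sigma> x y = meet (line_c \<rho> \<sigma> x y) (line_d \<rho> \<sigma> x y)"

definition quad_area :: "pt \<Rightarrow> pt \<Rightarrow> pt \<Rightarrow> pt \<Rightarrow> real" where
  "quad_area Q1 Q2 Q3 Q4 = (det2 Q1 Q2 + det2 Q2 Q3 + det2 Q3 Q4 + det2 Q4 Q1) / 2"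

definition turn :: "pt \<Rightarrow> pt \<Rightarrow> pt \<Rightarrow> real" where
  "turn A B C = det2 (B - A) (C - B)"

definition convex_quad :: "pt \<Rightarrow> pt \<Rightarrow> pt \<Rightarrow> pt \<Rightarrow> bool" where
  "convex_quad Q1 Q2 Q3 Q4 \<longleftrightarrow>
     (turn Q1 Q2 Q3 > 0 \<and> turn Q2 Q3 Q4 > 0 \<and> turn Q3 Q4 Q1 > 0 \<and> turn Q4 Q1 Q2 > 0) \<or>
     (turn Q1 Q2 Q3 < 0 \<and> turn Q2 Q3 Q4 < 0 \<and> turn Q3 Q4 Q1 < 0 \<and> turn Q4 Q1 Q2 < 0)"

definition quadP_convex :: "real \<Rightarrow> real \<Rightarrow> real \<Rightarrow> real \<Rightarrow> bool" where
  "quadP_convex \<rho> \<sigma> x y =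
     convex_quad (P1 \<rho> \<sigma> x y) (P2 \<rho> \<sigma> x y) (P3 \<rho> \<sigma> x y) (P4 \<rho> \<sigma> x y)"

definition side_a :: "real \<Rightarrow> real \<Rightarrow> pt \<Rightarrow> real \<Rightarrow> real \<Rightarrow> real" where
  "side_a \<rho> \<sigma> ua x y = (P2 \<rho> \<sigma> x y - P1 \<rho> \<sigma> x y) \<bullet> ua"
definition side_b :: "real \<Rightarrow> real \<Rightarrow> pt \<Rightarrow> real \<Rightarrow> real \<Rightarrow> real" where
  "side_b \<rho> \<sigma> ub x y = (P3 \<rho> \<sigma> x y - P2 \<rho> \<sigma> x y) \<bullet> ub"
definition side_c :: "real \<Rightarrow> real \<Rightarrow> pt \<Rightarrow> real \<Rightarrow> real \<Rightarrow> real" where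
  "side_c \<rho> \<sigma> uc x y = (P4 \<rho> \<sigma> x y - P3 \<rho> \<sigma> x y) \<bullet> uc"
definition side_d :: "real \<Rightarrow> real \<Rightarrow> pt \<Rightarrow> real \<Rightarrow> real \<Rightarrow> real" where
  "side_d \<rho> \<sigma> ud x y = (P1 \<rho> \<sigma> x y - P4 \<rho> \<sigma> x y) \<bullet> ud"

definition areaA :: "real \<Rightarrow> real \<Rightarrow> real \<Rightarrow> real \<Rightarrow> real \<Rightarrow> real" where
  "areaA e \<rho> \<sigma> x y = e * quad_area (P1 \<rho> \<sigma> x y) (P2 \<rho> \<sigma> x y) (P3 \<rho> \<sigma> x y) (P4 \<rho> \<sigma> x y)"

definition brahm :: "real \<Rightarrow> real \<Rightarrow> real \<Rightarrow> real \<Rightarrow> real" where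
  "brahm a b c d = (let s = (a + b + c + d) / 2 in (s - a) * (s - b) * (s - c) * (s - d))"

definition Bsq :: "real \<Rightarrow> real \<Rightarrow> pt \<Rightarrow> pt \<Rightarrow> pt \<Rightarrow> pt \<Rightarrow> real \<Rightarrow> real \<Rightarrow> real" where
  "Bsq \<rho> \<sigma> ua ub uc ud x y =
     brahm (side_a \<rho> \<sigma> ua x y) (side_b \<rho> \<sigma> ub x y) (side_c \<rho> \<sigma> uc x y) (side_d \<rho> \<sigma> ud x y)"

end

theory Submission imports Defs begin

text \<open>The vertices depend linearly on \<open>(x, y)\<close>, and each edge \<open>P\<^sub>i\<^sub>+\<^sub>1 - P\<^sub>i\<close> is a multiple
  \<open>dx\<close> of the direction \<open>(1, slope)\<close> of its side, so every signed side length is a linear form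
  in \<open>(x, y)\<close> and the shoelace sum collapses to a multiple of \<open>xy\<close>. The unit vectors satisfy
  \<open>u\<^sub>c = \<plusminus>u\<^sub>a\<close> and \<open>u\<^sub>d = \<plusminus>u\<^sub>b\<close>; at a convex parameter the product of the four \<open>dx\<close>
  is negative, so positivity of the sides there leaves only two sign patterns. For both,
  the four factors \<open>s - a, \<dots>, s - d\<close> of Brahmagupta's product are multiples of \<open>x\<close> and
  \<open>y\<close>, two of each, whence \<open>B\<^sup>2\<close> is a multiple of \<open>(xy)\<^sup>2\<close>. Convexity also forces \<open>xy \<noteq> 0\<close>,
  so the ratio \<open>A\<^sup>2/B\<^sup>2\<close> is constant there.\<close>

lemma meet_line_slope:
  fixes p q :: pt
  assumes "m \<noteq> n"
  defines "t \<equiv> (snd q - snd p + m * fst p - n * fst q) / (m - n)"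
  shows "meet (line_slope p m) (line_slope q n) = (t, snd p + m * (t - fst p))"
proof -
  have "m - n \<noteq> 0" using assms by simp
  show ?thesis
    unfolding meet_def
  proof (rule the_equality)
    show "(t, snd p + m * (t - fst p)) \<in> line_slope p m \<inter> line_slope q n"
      using \<open>m - n \<noteq> 0\<close> unfolding line_slope_def t_def by (simp add: field_simps)
  next
    fix r assume r: "r \<in> line_slope p m \<inter> line_slope q n"
    with \<open>m - n \<noteq> 0\<close> have "fst r = t" unfolding line_slope_def t_def by (simp add: field_simps)
    with r show "r = (t, snd p + m * (t - fst p))"
      unfolding line_slope_def by (cases r) auto
  qed
qed

lemma inner_slope_direction:
  assumes "det2 u (1, m) = 0"
  shows "(p, m * p) \<bullet> u = fst u * (1 + m\<^sup>2) * p"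
proof -
  have "snd u = m * fst u" using assms unfolding det2_def by (simp add: algebra_simps)
  then show ?thesis by (cases u) (simp add: algebra_simps power2_eq_square)
qed

lemma unit_slope_direction:
  assumes "norm u = 1" and "det2 u (1, m) = 0"
  shows "(fst u)\<^sup>2 * (1 + m\<^sup>2) = 1"
proof -
  have "snd u = m * fst u" using assms(2) unfolding det2_def by (simp add: algebra_simps)
  moreover have "(norm u)\<^sup>2 = (fst u)\<^sup>2 + (snd u)\<^sup>2" by (cases u) (simp add: norm_Pair)
  ultimately show ?thesis using assms(1) by (simp add: algebra_simps power_mult_distrib)
qed

lemma same_squares_opposite_product:
  fixes a b c d :: real
  assumes "a\<^sup>2 = c\<^sup>2" and "b\<^sup>2 = d\<^sup>2" and "a * b * c * d < 0"
  shows "(c = a \<and> d = - b) \<or> (c = - a \<and> d = b)"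
  using assms by (auto simp: power2_eq_iff mult_less_0_iff zero_less_mult_iff)

lemma convex_quad_turn_product_pos:
  assumes "convex_quad Q1 Q2 Q3 Q4"
  shows "turn Q1 Q2 Q3 * turn Q3 Q4 Q1 > 0"
  using assms unfolding convex_quad_def by (auto simp: zero_less_mult_iff)

locale nonparallel_slopes =
  fixes \<rho> \<sigma> :: real
  assumes rho_neq_sigma: "\<rho> \<noteq> \<sigma>" and rho_neq_minus_sigma: "\<rho> \<noteq> - \<sigma>"
begin

lemma slope_denominators_nonzero: "\<rho> + \<sigma> \<noteq> 0" "\<rho> - \<sigma> \<noteq> 0" "\<rho>\<^sup>2 - \<sigma>\<^sup>2 \<noteq> 0"
  using rho_neq_sigma rho_neq_minus_sigma by (auto simp: power2_eq_iff)

lemma P1_eq: "P1 \<rho> \<sigma> x y = ((y + \<sigma> * x) / (\<rho> + \<sigma>), \<rho> * ((y + \<sigma> * x) / (\<rho> + \<sigma>)))"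
  unfolding P1_def line_a_def line_d_def using slope_denominators_nonzero rho_neq_minus_sigma
  by (subst meet_line_slope) (auto simp: field_simps)

lemma P2_eq: "P2 \<rho> \<sigma> x y = ((y - \<sigma> * x) / (\<rho> - \<sigma>), \<rho> * ((y - \<sigma> * x) / (\<rho> - \<sigma>)))"
  unfolding P2_def line_a_def line_b_def using slope_denominators_nonzero rho_neq_sigma
  by (subst meet_line_slope) (auto simp: field_simps)

lemma P3_eq: "P3 \<rho> \<sigma> x y = ((\<sigma> * x - y) / (\<rho> + \<sigma>), - \<rho> * ((\<sigma> * x - y) / (\<rho> + \<sigma>)))"
  unfolding P3_def line_b_def line_c_def using slope_denominators_nonzero
  by (subst meet_line_slope) (auto simp: field_simps)

lemma P4_eq: "P4 \<rho> \<sigma> x y = ((y + \<sigma> * x) / (\<sigma> - \<rho>), - \<rho> * ((y + \<sigma> * x) / (\<sigma> - \<rho>)))"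
  unfolding P4_def line_c_def line_d_def using slope_denominators_nonzero
  by (subst meet_line_slope) (auto simp: field_simps)

definition dx_a :: "real \<Rightarrow> real \<Rightarrow> real" where
  "dx_a x y = 2 * \<sigma> * (y - \<rho> * x) / (\<rho>\<^sup>2 - \<sigma>\<^sup>2)"
definition dx_b :: "real \<Rightarrow> real \<Rightarrow> real" where
  "dx_b x y = 2 * \<rho> * (\<sigma> * x - y) / (\<rho>\<^sup>2 - \<sigma>\<^sup>2)"
definition dx_c :: "real \<Rightarrow> real \<Rightarrow> real" where
  "dx_c x y = - 2 * \<sigma> * (y + \<rho> * x) / (\<rho>\<^sup>2 - \<sigma>\<^sup>2)"
definition dx_d :: "real \<Rightarrow> real \<Rightarrow> real" where
  "dx_d x y = 2 * \<rho> * (y + \<sigma> * x) / (\<rho>\<^sup>2 - \<sigma>\<^sup>2)"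

lemma edge_a: "P2 \<rho> \<sigma> x y - P1 \<rho> \<sigma> x y = (dx_a x y, \<rho> * dx_a x y)"
  unfolding P1_eq P2_eq dx_a_def using slope_denominators_nonzero
  by (simp add: field_simps power2_eq_square)

lemma edge_b: "P3 \<rho> \<sigma> x y - P2 \<rho> \<sigma> x y = (dx_b x y, \<sigma> * dx_b x y)"
  unfolding P2_eq P3_eq dx_b_def using slope_denominators_nonzero
  by (simp add: field_simps power2_eq_square)

lemma edge_c: "P4 \<rho> \<sigma> x y - P3 \<rho> \<sigma> x y = (dx_c x y, - \<rho> * dx_c x y)"
  unfolding P3_eq P4_eq dx_c_def using slope_denominators_nonzero
  by (simp add: field_simps power2_eq_square)

lemma edge_d: "P1 \<rho> \<sigma> x y - P4 \<rho> \<sigma> x y = (dx_d x y, - \<sigma> * dx_d x y)"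
  unfolding P1_eq P4_eq dx_d_def using slope_denominators_nonzero
  by (simp add: field_simps power2_eq_square)

lemma areaA_eq: "areaA e \<rho> \<sigma> x y = e * (- 4 * \<rho> * \<sigma> / (\<rho>\<^sup>2 - \<sigma>\<^sup>2)) * (x * y)"
proof -
  define X1 where "X1 = (y + \<sigma> * x) / (\<rho> + \<sigma>)"
  define X2 where "X2 = (y - \<sigma> * x) / (\<rho> - \<sigma>)"
  define X3 where "X3 = (\<sigma> * x - y) / (\<rho> + \<sigma>)"
  define X4 where "X4 = (y + \<sigma> * x) / (\<sigma> - \<rho>)"
  have "areaA e \<rho> \<sigma> x y = e * \<rho> * (X4 * X1 - X2 * X3)"
    unfolding areaA_def quad_area_def det2_def P1_eq P2_eq P3_eq P4_eq
      X1_def[symmetric] X2_def[symmetric] X3_def[symmetric] X4_def[symmetric]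
    by (simp add: field_simps)
  also have "X4 * X1 - X2 * X3 = ((y - \<sigma> * x)\<^sup>2 - (y + \<sigma> * x)\<^sup>2) / ((\<rho> + \<sigma>) * (\<rho> - \<sigma>))"
  proof -
    have "X4 * X1 = - ((y + \<sigma> * x)\<^sup>2) / ((\<rho> + \<sigma>) * (\<rho> - \<sigma>))"
      unfolding X1_def X4_def using slope_denominators_nonzero by (simp add: field_simps power2_eq_square)
    moreover have "X2 * X3 = - ((y - \<sigma> * x)\<^sup>2) / ((\<rho> + \<sigma>) * (\<rho> - \<sigma>))"
      unfolding X2_def X3_def using slope_denominators_nonzero by (simp add: field_simps power2_eq_square)
    ultimately show ?thesis by (simp add: diff_divide_distrib)
  qed
  also have "(\<rho> + \<sigma>) * (\<rho> - \<sigma>) = \<rho>\<^sup>2 - \<sigma>\<^sup>2"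
    by (simp add: power2_eq_square algebra_simps)
  also have "(y - \<sigma> * x)\<^sup>2 - (y + \<sigma> * x)\<^sup>2 = - 4 * \<sigma> * (x * y)"
    by (simp add: power2_eq_square algebra_simps)
  finally show ?thesis by simp
qed

lemma side_a_eq:
  assumes "det2 u (1, \<rho>) = 0"
  shows "side_a \<rho> \<sigma> u x y = fst u * (1 + \<rho>\<^sup>2) * dx_a x y"
  unfolding side_a_def edge_a using inner_slope_direction[OF assms] by simp

lemma side_b_eq:
  assumes "det2 u (1, \<sigma>) = 0"
  shows "side_b \<rho> \<sigma> u x y = fst u * (1 + \<sigma>\<^sup>2) * dx_b x y"
  unfolding side_b_def edge_b using inner_slope_direction[OF assms] by simp

lemma side_c_eq:
  assumes "det2 u (1, - \<rho>) = 0"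
  shows "side_c \<rho> \<sigma> u x y = fst u * (1 + \<rho>\<^sup>2) * dx_c x y"
  unfolding side_c_def edge_c using inner_slope_direction[OF assms] by simp

lemma side_d_eq:
  assumes "det2 u (1, - \<sigma>) = 0"
  shows "side_d \<rho> \<sigma> u x y = fst u * (1 + \<sigma>\<^sup>2) * dx_d x y"
  unfolding side_d_def edge_d using inner_slope_direction[OF assms] by simp

lemma dx_product:
  "dx_a x y * dx_b x y * dx_c x y * dx_d x y
     = 16 * \<rho>\<^sup>2 * \<sigma>\<^sup>2 * (y\<^sup>2 - \<rho>\<^sup>2 * x\<^sup>2) * (y\<^sup>2 - \<sigma>\<^sup>2 * x\<^sup>2) / (\<rho>\<^sup>2 - \<sigma>\<^sup>2) ^ 4"
proof -
  have "dx_a x y * dx_b x y * dx_c x y * dx_d x y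
      = (2 * \<sigma> * (y - \<rho> * x)) * (2 * \<rho> * (\<sigma> * x - y)) * (- 2 * \<sigma> * (y + \<rho> * x))
          * (2 * \<rho> * (y + \<sigma> * x)) / (\<rho>\<^sup>2 - \<sigma>\<^sup>2) ^ 4"
    unfolding dx_a_def dx_b_def dx_c_def dx_d_def by (simp add: eval_nat_numeral)
  also have "(2 * \<sigma> * (y - \<rho> * x)) * (2 * \<rho> * (\<sigma> * x - y)) * (- 2 * \<sigma> * (y + \<rho> * x))
          * (2 * \<rho> * (y + \<sigma> * x)) = 16 * \<rho>\<^sup>2 * \<sigma>\<^sup>2 * (y\<^sup>2 - \<rho>\<^sup>2 * x\<^sup>2) * (y\<^sup>2 - \<sigma>\<^sup>2 * x\<^sup>2)"
    by algebra
  finally show ?thesis .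
qed

lemma convex_dx_product_neg:
  assumes "quadP_convex \<rho> \<sigma> x y"
  shows "dx_a x y * dx_b x y * dx_c x y * dx_d x y < 0"
proof -
  have "turn (P1 \<rho> \<sigma> x y) (P2 \<rho> \<sigma> x y) (P3 \<rho> \<sigma> x y) * turn (P3 \<rho> \<sigma> x y) (P4 \<rho> \<sigma> x y) (P1 \<rho> \<sigma> x y) > 0"
    using assms unfolding quadP_convex_def by (rule convex_quad_turn_product_pos)
  also have "turn (P1 \<rho> \<sigma> x y) (P2 \<rho> \<sigma> x y) (P3 \<rho> \<sigma> x y) * turn (P3 \<rho> \<sigma> x y) (P4 \<rho> \<sigma> x y) (P1 \<rho> \<sigma> x y)
      = - ((\<rho> - \<sigma>)\<^sup>2) * (dx_a x y * dx_b x y * dx_c x y * dx_d x y)"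
    unfolding turn_def edge_a edge_b edge_c edge_d det2_def by (simp add: algebra_simps power2_eq_square)
  finally show ?thesis using slope_denominators_nonzero by (simp add: mult_less_0_iff)
qed

lemma convex_imp_xy_nonzero:
  assumes "quadP_convex \<rho> \<sigma> x y"
  shows "x * y \<noteq> 0"
proof
  assume "x * y = 0"
  then have "(y\<^sup>2 - \<rho>\<^sup>2 * x\<^sup>2) * (y\<^sup>2 - \<sigma>\<^sup>2 * x\<^sup>2) \<ge> 0"
    by (auto simp: power2_eq_square)
  then have "dx_a x y * dx_b x y * dx_c x y * dx_d x y \<ge> 0"
    unfolding dx_product by simp
  with convex_dx_product_neg[OF assms] show False by simp
qed

lemma brahm_sides:
  fixes A B :: real
  defines "C \<equiv> 16 * \<rho>\<^sup>2 * \<sigma>\<^sup>2 * (A * \<sigma> + B * \<rho>) * (A + B) * (A * \<sigma> - B * \<rho>) * (B - A)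
                / (\<rho>\<^sup>2 - \<sigma>\<^sup>2) ^ 4"
  shows "brahm (A * dx_a x y) (B * dx_b x y) (A * dx_c x y) (- (B * dx_d x y)) = C * (x * y)\<^sup>2"
    and "brahm (A * dx_a x y) (B * dx_b x y) (- (A * dx_c x y)) (B * dx_d x y) = C * (x * y)\<^sup>2"
proof -
  define D where "D = \<rho>\<^sup>2 - \<sigma>\<^sup>2"
  have "D \<noteq> 0" unfolding D_def using slope_denominators_nonzero by simp
  define a b c d where "a = A * dx_a x y" and "b = B * dx_b x y"
    and "c = A * dx_c x y" and "d = B * dx_d x y"
  note unfold_sides = a_def b_def c_def d_def dx_a_def dx_b_def dx_c_def dx_d_def D_def[symmetric]
  have C_eq: "C = 16 * \<rho>\<^sup>2 * \<sigma>\<^sup>2 * (A * \<sigma> + B * \<rho>) * (A + B) * (A * \<sigma> - B * \<rho>) * (B - A) / D ^ 4"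
    unfolding C_def D_def ..
  define s where "s = (a + b + c + - d) / 2"
  have diffs: "s - a = - 2 * y * (A * \<sigma> + B * \<rho>) / D"
    "s - b = - 2 * \<rho> * \<sigma> * x * (A + B) / D"
    "s - c = 2 * y * (A * \<sigma> - B * \<rho>) / D"
    "s - - d = 2 * \<rho> * \<sigma> * x * (B - A) / D"
    unfolding s_def unfold_sides using \<open>D \<noteq> 0\<close> by (simp_all add: field_simps)
  show "brahm a b c (- d) = C * (x * y)\<^sup>2"
    unfolding brahm_def Let_def s_def[symmetric] diffs C_eq using \<open>D \<noteq> 0\<close>
    by (simp add: field_simps power2_eq_square eval_nat_numeral)
  define s' where "s' = (a + b + - c + d) / 2"
  have diffs': "s' - a = 2 * \<rho> * \<sigma> * x * (A + B) / D"
    "s' - b = 2 * y * (A * \<sigma> + B * \<rho>) / D"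
    "s' - - c = 2 * \<rho> * \<sigma> * x * (B - A) / D"
    "s' - d = 2 * y * (A * \<sigma> - B * \<rho>) / D"
    unfolding s'_def unfold_sides using \<open>D \<noteq> 0\<close> by (simp_all add: field_simps)
  show "brahm a b (- c) d = C * (x * y)\<^sup>2"
    unfolding brahm_def Let_def s'_def[symmetric] diffs' C_eq using \<open>D \<noteq> 0\<close>
    by (simp add: field_simps power2_eq_square eval_nat_numeral)
qed

lemma direction_signs_of_positive_sides:
  assumes "norm ua = 1" and "det2 ua (1, \<rho>) = 0" and "norm ub = 1" and "det2 ub (1, \<sigma>) = 0"
    and "norm uc = 1" and "det2 uc (1, - \<rho>) = 0" and "norm ud = 1" and "det2 ud (1, - \<sigma>) = 0"
    and "quadP_convex \<rho> \<sigma> x y"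
    and "side_a \<rho> \<sigma> ua x y > 0" and "side_b \<rho> \<sigma> ub x y > 0"
    and "side_c \<rho> \<sigma> uc x y > 0" and "side_d \<rho> \<sigma> ud x y > 0"
  shows "(fst uc = fst ua \<and> fst ud = - fst ub) \<or> (fst uc = - fst ua \<and> fst ud = fst ub)"
proof (rule same_squares_opposite_product)
  have "(fst ua)\<^sup>2 * (1 + \<rho>\<^sup>2) = (fst uc)\<^sup>2 * (1 + \<rho>\<^sup>2)"
    using unit_slope_direction[OF assms(1,2)] unit_slope_direction[OF assms(5,6)] by simp
  then show "(fst ua)\<^sup>2 = (fst uc)\<^sup>2" by (simp add: add_nonneg_eq_0_iff)
  have "(fst ub)\<^sup>2 * (1 + \<sigma>\<^sup>2) = (fst ud)\<^sup>2 * (1 + \<sigma>\<^sup>2)"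
    using unit_slope_direction[OF assms(3,4)] unit_slope_direction[OF assms(7,8)] by simp
  then show "(fst ub)\<^sup>2 = (fst ud)\<^sup>2" by (simp add: add_nonneg_eq_0_iff)
  have "0 < side_a \<rho> \<sigma> ua x y * side_b \<rho> \<sigma> ub x y * side_c \<rho> \<sigma> uc x y * side_d \<rho> \<sigma> ud x y"
    using assms(10-13) by simp
  also have "\<dots> = (fst ua * fst ub * fst uc * fst ud)
      * (((1 + \<rho>\<^sup>2) * (1 + \<sigma>\<^sup>2))\<^sup>2 * (dx_a x y * dx_b x y * dx_c x y * dx_d x y))"
    using side_a_eq[OF assms(2)] side_b_eq[OF assms(4)] side_c_eq[OF assms(6)] side_d_eq[OF assms(8)]
    by (simp add: algebra_simps power2_eq_square)
  finally have "0 < (fst ua * fst ub * fst uc * fst ud)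
      * (((1 + \<rho>\<^sup>2) * (1 + \<sigma>\<^sup>2))\<^sup>2 * (dx_a x y * dx_b x y * dx_c x y * dx_d x y))" .
  moreover have "((1 + \<rho>\<^sup>2) * (1 + \<sigma>\<^sup>2))\<^sup>2 * (dx_a x y * dx_b x y * dx_c x y * dx_d x y) < 0"
    using convex_dx_product_neg[OF assms(9)] by (simp add: mult_pos_neg add_nonneg_eq_0_iff)
  ultimately show "fst ua * fst ub * fst uc * fst ud < 0"
    by (smt (verit) mult_nonneg_nonpos)
qed

lemma Bsq_quadratic:
  assumes "det2 ua (1, \<rho>) = 0" and "det2 ub (1, \<sigma>) = 0"
    and "det2 uc (1, - \<rho>) = 0" and "det2 ud (1, - \<sigma>) = 0"
    and "(fst uc = fst ua \<and> fst ud = - fst ub) \<or> (fst uc = - fst ua \<and> fst ud = fst ub)"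
  shows "\<exists>mu. \<forall>x y. Bsq \<rho> \<sigma> ua ub uc ud x y = mu * (x * y)\<^sup>2"
proof -
  define A B where "A = fst ua * (1 + \<rho>\<^sup>2)" and "B = fst ub * (1 + \<sigma>\<^sup>2)"
  have Bsq_sides: "Bsq \<rho> \<sigma> ua ub uc ud x y
      = brahm (A * dx_a x y) (B * dx_b x y) (fst uc * (1 + \<rho>\<^sup>2) * dx_c x y) (fst ud * (1 + \<sigma>\<^sup>2) * dx_d x y)"
    for x y
    unfolding Bsq_def A_def B_def side_a_eq[OF assms(1)] side_b_eq[OF assms(2)]
      side_c_eq[OF assms(3)] side_d_eq[OF assms(4)] ..
  from assms(5) show ?thesis
  proof
    assume "fst uc = fst ua \<and> fst ud = - fst ub"
    then have "\<forall>x y. Bsq \<rho> \<sigma> ua ub uc ud x y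
        = brahm (A * dx_a x y) (B * dx_b x y) (A * dx_c x y) (- (B * dx_d x y))"
      unfolding Bsq_sides A_def B_def by simp
    then show ?thesis unfolding brahm_sides(1) by blast
  next
    assume "fst uc = - fst ua \<and> fst ud = fst ub"
    then have "\<forall>x y. Bsq \<rho> \<sigma> ua ub uc ud x y
        = brahm (A * dx_a x y) (B * dx_b x y) (- (A * dx_c x y)) (B * dx_d x y)"
      unfolding Bsq_sides A_def B_def by simp
    then show ?thesis unfolding brahm_sides(2) by blast
  qed
qed

end

theorem mainTheorem3:
  fixes \<rho> \<sigma> e :: real and ua ub uc ud :: "real \<times> real"
  assumes "\<rho> \<noteq> 0" and "\<sigma> \<noteq> 0" and "\<rho> \<noteq> \<sigma>" and "\<rho> \<noteq> - \<sigma>"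
    and "norm ua = 1" and "det2 ua (1, \<rho>) = 0"
    and "norm ub = 1" and "det2 ub (1, \<sigma>) = 0"
    and "norm uc = 1" and "det2 uc (1, - \<rho>) = 0"
    and "norm ud = 1" and "det2 ud (1, - \<sigma>) = 0"
    and "e = 1 \<or> e = -1"
    and "\<exists>x0 y0. quadP_convex \<rho> \<sigma> x0 y0 \<and>
           side_a \<rho> \<sigma> ua x0 y0 > 0 \<and> side_b \<rho> \<sigma> ub x0 y0 > 0 \<and>
           side_c \<rho> \<sigma> uc x0 y0 > 0 \<and> side_d \<rho> \<sigma> ud x0 y0 > 0 \<and>
           areaA e \<rho> \<sigma> x0 y0 > 0"
  shows "(\<exists>lam mu. \<forall>x y. areaA e \<rho> \<sigma> x y = lam * (x * y) \<and>
                    Bsq \<rho> \<sigma> ua ub uc ud x y = mu * (x * y)^2)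
         \<and> (\<exists>k. \<forall>x y. quadP_convex \<rho> \<sigma> x y \<longrightarrow>
                    (areaA e \<rho> \<sigma> x y)^2 / Bsq \<rho> \<sigma> ua ub uc ud x y = k)"
proof -
  interpret nonparallel_slopes \<rho> \<sigma> using assms(3,4) by unfold_locales
  obtain x0 y0 where "quadP_convex \<rho> \<sigma> x0 y0"
    and "side_a \<rho> \<sigma> ua x0 y0 > 0" "side_b \<rho> \<sigma> ub x0 y0 > 0"
    and "side_c \<rho> \<sigma> uc x0 y0 > 0" "side_d \<rho> \<sigma> ud x0 y0 > 0"
    using assms(14) by blast
  then have "(fst uc = fst ua \<and> fst ud = - fst ub) \<or> (fst uc = - fst ua \<and> fst ud = fst ub)"
    using direction_signs_of_positive_sides assms(5-12) by blast
  then obtain mu where Bsq_eq: "\<And>x y. Bsq \<rho> \<sigma> ua ub uc ud x y = mu * (x * y)\<^sup>2"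
    using Bsq_quadratic assms(6,8,10,12) by blast
  define lam where "lam = e * (- 4 * \<rho> * \<sigma> / (\<rho>\<^sup>2 - \<sigma>\<^sup>2))"
  have area: "\<And>x y. areaA e \<rho> \<sigma> x y = lam * (x * y)"
    unfolding lam_def by (rule areaA_eq)
  have "(areaA e \<rho> \<sigma> x y)\<^sup>2 / Bsq \<rho> \<sigma> ua ub uc ud x y = lam\<^sup>2 / mu"
    if "quadP_convex \<rho> \<sigma> x y" for x y
    using convex_imp_xy_nonzero[OF that] unfolding area Bsq_eq by (simp add: power_mult_distrib)
  with area Bsq_eq show ?thesis by blast
qed

end
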